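(* Let $\{\varphi_n\},\{\psi_n\}$ be biorthogonal sequences in a Hilbert space $\mathcal H$ forming a $(\mathcal D,\mathcal E)$-quasi basis for dense subspaces $\mathcal D,\mathcal E$ with $D_\psi\subseteq\mathcal D\subseteq D(\varphi)$, $D_\varphi\subseteq\mathcal E\subseteq D(\psi)$. Let $\{f_n\}$ be an ONB such that $\overline{T_{f,\varphi}|_{\mathcal D}}$ is positive self-adjoint and $(\{f_n\},\overline{T_{f,\varphi}|_{\mathcal D}})$ is a constructing pair for $\{\varphi_n\}$, and let $\{g_n\}$ be an ONB such that $\overline{T_{g,\psi}|_{\mathcal E}}$ is positive self-adjoint and $(\{g_n\},\overline{T_{g,\psi}|_{\mathcal E}})$ is a constructing pair for $\{\psi_n\}$. Let $\alpha=\{\alpha_n\}$ be a real sequence with $0\le\alpha_0<\alpha_n<\alpha_{n+1}$ and $\alpha_{n+1}\le\alpha_n+r$ for all $n\ge1$, for some $r>0$. Then: (1) If $D^\infty(H_f^\alpha)\subseteq\mathcal D$ and $T_{f,\varphi}D^\infty(H_f^\alpha)$ is dense in $\mathcal H$, then, with $T_\varphi^0:=\overline{T_{f,\varphi}|_{D^\infty(H_f^\alpha)}}$, the pair $(\{f_n\},T_\varphi^0)$ is a constructing pair for $\{\varphi_n\}$, and the operators $H_\varphi^0:=T_\varphi^0H_f^\alpha(T_\varphi^0)^{-1}$, $A_\varphi^0:=T_\varphi^0A_f^\alpha(T_\varphi^0)^{-1}$, $B_\varphi^0:=T_\varphi^0B_f^\alpha(T_\varphi^0)^{-1}$ all belong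 to $\mathcal L(T_\varphi^0D^\infty(H_f^\alpha))$. (2) If $D^\infty(H_g^\alpha)\subseteq\mathcal E$ and $T_{g,\psi}D^\infty(H_g^\alpha)$ is dense in $\mathcal H$, then, with $T_\psi^0:=\overline{T_{g,\psi}|_{D^\infty(H_g^\alpha)}}$, the pair $(\{g_n\},T_\psi^0)$ is a constructing pair for $\{\psi_n\}$, and $H_\psi^0:=T_\psi^0H_g^\alpha(T_\psi^0)^{-1}$, $A_\psi^0:=T_\psi^0A_g^\alpha(T_\psi^0)^{-1}$, $B_\psi^0:=T_\psi^0B_g^\alpha(T_\psi^0)^{-1}$ all belong to $\mathcal L(T_\psi^0D^\infty(H_g^\alpha))$.
   Context: Inner product linear in the first argument. Biorthogonal: $\langle\varphi_n,\psi_m\rangle=\delta_{nm}$. $D_\varphi,D_\psi$ are the linear spans; $D(\varphi)=\{x:\sum_n|\langle x,\varphi_n\rangle|^2<\infty\}$, similarly $D(\psi)$. The pair is a $(\mathcal D,\mathcal E)$-quasi basis if $\sum_k\langle x,\varphi_k\rangle\langle\psi_k,y\rangle=\langle x,y\rangle$ for all $x\in\mathcal D$, $y\in\mathcal E$. For an ONB $\{f_n\}$, $T_{f,\varphi}$ has domain $D(\varphi)$ and $T_{f,\varphi}x=\sum_n\langle x,\varphi_n\rangle f_n$ (similarly $T_{g,\psi}$ on $D(\psi)$); bar is closure, $|$ restriction. A constructing pair for $\{\chi_n\}$ is $(\{f_n\},S)$ with $\{f_n\}$ an ONB, $S$ densely defined closed with densely defined inverse, $f_n\in D(S)\cap D((S^{-1})^*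 )$, $Sf_n=\chi_n$. For an ONB $\{f_n\}$: $H_f^\alpha x=\sum_n\alpha_n\langle x,f_n\rangle f_n$, $A_f^\alpha x=\sum_n\alpha_{n+1}\langle x,f_{n+1}\rangle f_n$, $B_f^\alpha x=\sum_n\alpha_{n+1}\langle x,f_n\rangle f_{n+1}$, each on the maximal domain of $x$ for which the coefficient sequence is square summable. $D^\infty(H)=\bigcap_{n\ge1}D(H^n)$. For a subspace $\mathcal D_0$, $\mathcal L(\mathcal D_0)$ is the algebra of linear operators from $\mathcal D_0$ into $\mathcal D_0$; an operator "belongs to" $\mathcal L(\mathcal D_0)$ if $\mathcal D_0$ is in its domain and is mapped into itself. *)

theory Defs
  imports "HOL-Analysis.Analysis"
begin

class complex_vector = real_vector +
  fixes scaleC :: "complex \<Rightarrow> 'a \<Rightarrow> 'a" (infixr \<open>*\<^sub>C\<close> 75)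
  assumes scaleC_add_right: "a *\<^sub>C (x + y) = a *\<^sub>C x + a *\<^sub>C y"
    and scaleC_add_left: "(a + b) *\<^sub>C x = a *\<^sub>C x + b *\<^sub>C x"
    and scaleC_scaleC: "a *\<^sub>C (b *\<^sub>C x) = (a * b) *\<^sub>C x"
    and scaleC_one: "1 *\<^sub>C x = x"
    and scaleR_scaleC: "scaleR r x = complex_of_real r *\<^sub>C x"

class complex_inner = complex_vector + real_normed_vector +
  fixes cinner :: "'a \<Rightarrow> 'a \<Rightarrow> complex"
  assumes cinner_commute: "cinner x y = cnj (cinner y x)"
    and cinner_add_left: "cinner (x + y) z = cinner x z + cinner y z"
    and cinner_scaleC_left: "cinner (a *\<^sub>C x) y = a * cinner x y"
    and cinner_norm: "cinner x x = complex_of_real ((norm x)\<^sup>2)"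

class chilbert_space = complex_inner + complete_space

definition csubspace :: "'a::complex_vector set \<Rightarrow> bool" where
  "csubspace S \<longleftrightarrow> 0 \<in> S \<and> (\<forall>x\<in>S. \<forall>y\<in>S. x + y \<in> S) \<and> (\<forall>c. \<forall>x\<in>S. c *\<^sub>C x \<in> S)"

definition cspan :: "'a::complex_vector set \<Rightarrow> 'a set" where
  "cspan S = {x. \<exists>F c. finite F \<and> F \<subseteq> S \<and> x = (\<Sum>v\<in>F. c v *\<^sub>C v)}"

definition dense_set :: "'a::topological_space set \<Rightarrow> bool" where
  "dense_set S \<longleftrightarrow> closure S = UNIV"

definition is_onb :: "(nat \<Rightarrow> 'a::complex_inner) \<Rightarrow> bool" where
  "is_onb f \<longleftrightarrow> (\<forall>n m. cinner (f n) (f m) = (if n = m then 1 else 0))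
                  \<and> dense_set (cspan (range f))"

definition biorthogonal :: "(nat \<Rightarrow> 'a::complex_inner) \<Rightarrow> (nat \<Rightarrow> 'a) \<Rightarrow> bool" where
  "biorthogonal \<phi> \<psi> \<longleftrightarrow> (\<forall>n m. cinner (\<phi> n) (\<psi> m) = (if n = m then 1 else 0))"

definition seq_dom :: "(nat \<Rightarrow> 'a::complex_inner) \<Rightarrow> 'a set" where
  "seq_dom \<phi> = {x. summable (\<lambda>n. (cmod (cinner x (\<phi> n)))\<^sup>2)}"

definition quasi_basis ::
  "(nat \<Rightarrow> 'a::complex_inner) \<Rightarrow> (nat \<Rightarrow> 'a) \<Rightarrow> 'a set \<Rightarrow> 'a set \<Rightarrow> bool" where
  "quasi_basis \<phi> \<psi> D E \<longleftrightarrow>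
     (\<forall>x\<in>D. \<forall>y\<in>E. (\<lambda>k. cinner x (\<phi> k) * cinner (\<psi> k) y) sums cinner x y)"

section \<open>(Unbounded) linear operators, represented by their graphs\<close>

type_synonym 'a lop = "('a \<times> 'a) set"

definition lin_op :: "'a::complex_vector lop \<Rightarrow> bool" where
  "lin_op T \<longleftrightarrow> (\<forall>x y z. (x, y) \<in> T \<longrightarrow> (x, z) \<in> T \<longrightarrow> y = z)
     \<and> (0, 0) \<in> T
     \<and> (\<forall>x y u v. (x, y) \<in> T \<longrightarrow> (u, v) \<in> T \<longrightarrow> (x + u, y + v) \<in> T)
     \<and> (\<forall>c x y. (x, y) \<in> T \<longrightarrow> (c *\<^sub>C x, c *\<^sub>C y) \<in> T)"

definition densely_defined :: "'a::{complex_vector,topological_space} lop \<Rightarrow> bool" where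
  "densely_defined T \<longleftrightarrow> dense_set (Domain T)"

text \<open>Closed operator: its graph is closed in H x H. The closure of an operator is the
  closure of its graph (used only for closable operators).\<close>
definition closed_op :: "'a::{complex_vector,topological_space} lop \<Rightarrow> bool" where
  "closed_op T \<longleftrightarrow> lin_op T \<and> closed T"

definition op_closure :: "'a::topological_space lop \<Rightarrow> 'a lop" where
  "op_closure T = closure T"

definition op_restrict :: "'a lop \<Rightarrow> 'a set \<Rightarrow> 'a lop" where
  "op_restrict T D = {(x, y). (x, y) \<in> T \<and> x \<in> D}"

definition op_inv :: "'a lop \<Rightarrow> 'a lop" where
  "op_inv T = converse T"

definition adjoint :: "'a::complex_inner lop \<Rightarrow> 'a lop" where
  "adjoint T = {(y, z). \<forall>x w. (x, w) \<in> T \<longrightarrow> cinner w y = cinner x z}"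

definition self_adjoint :: "'a::complex_inner lop \<Rightarrow> bool" where
  "self_adjoint T \<longleftrightarrow> lin_op T \<and> densely_defined T \<and> adjoint T = T"

definition positive_op :: "'a::complex_inner lop \<Rightarrow> bool" where
  "positive_op T \<longleftrightarrow> (\<forall>x y. (x, y) \<in> T \<longrightarrow> (\<exists>t\<ge>0. cinner y x = complex_of_real t))"

text \<open>Composition S T R (apply R first, then T, then S), with natural domain.\<close>
definition op_comp3 :: "'a lop \<Rightarrow> 'a lop \<Rightarrow> 'a lop \<Rightarrow> 'a lop" where
  "op_comp3 S T R = R O T O S"

definition constructing_pair :: "(nat \<Rightarrow> 'a::complex_inner) \<Rightarrow> 'a lop \<Rightarrow> (nat \<Rightarrow> 'a) \<Rightarrow> bool" where
  "constructing_pair f S chi \<longleftrightarrow>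
     is_onb f \<and> densely_defined S \<and> closed_op S
     \<and> lin_op (op_inv S) \<and> densely_defined (op_inv S)
     \<and> (\<forall>n. f n \<in> Domain S \<and> f n \<in> Domain (adjoint (op_inv S)) \<and> (f n, chi n) \<in> S)"

definition ser_op :: "(nat \<Rightarrow> 'a::{complex_vector,topological_space}) \<Rightarrow> ('a \<Rightarrow> nat \<Rightarrow> complex) \<Rightarrow> 'a lop" where
  "ser_op e c = {(x, \<Sum>n. c x n *\<^sub>C e n) | x. summable (\<lambda>n. (cmod (c x n))\<^sup>2)}"

definition T_op :: "(nat \<Rightarrow> 'a::complex_inner) \<Rightarrow> (nat \<Rightarrow> 'a) \<Rightarrow> 'a lop" where
  "T_op f \<phi> = ser_op f (\<lambda>x n. cinner x (\<phi> n))"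

definition H_op :: "(nat \<Rightarrow> real) \<Rightarrow> (nat \<Rightarrow> 'a::complex_inner) \<Rightarrow> 'a lop" where
  "H_op \<alpha> f = ser_op f (\<lambda>x n. complex_of_real (\<alpha> n) * cinner x (f n))"

definition A_op :: "(nat \<Rightarrow> real) \<Rightarrow> (nat \<Rightarrow> 'a::complex_inner) \<Rightarrow> 'a lop" where
  "A_op \<alpha> f = ser_op f (\<lambda>x n. complex_of_real (\<alpha> (Suc n)) * cinner x (f (Suc n)))"

definition B_op :: "(nat \<Rightarrow> real) \<Rightarrow> (nat \<Rightarrow> 'a::complex_inner) \<Rightarrow> 'a lop" where
  "B_op \<alpha> f = ser_op (\<lambda>n. f (Suc n)) (\<lambda>x n. complex_of_real (\<alpha> (Suc n)) * cinner x (f n))"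

definition Dinf :: "'a lop \<Rightarrow> 'a set" where
  "Dinf H = (\<Inter>n\<in>{1..}. Domain (H ^^ n))"

definition in_L :: "'a lop \<Rightarrow> 'a set \<Rightarrow> bool" where
  "in_L T D0 \<longleftrightarrow> D0 \<subseteq> Domain T \<and> T `` D0 \<subseteq> D0"

end

theory Submission
  imports Defs
begin

text \<open>
  It is therefore a closed linear operator contained in the closure of T_{f,phi}|_D, from which it
  inherits injectivity and the values T0 f_n = phi_n; its domain is dense because it contains every
  f_n, and its range is dense by hypothesis. In the basis f, D^infinity(H_f^alpha) consists of the
  vectors whose coefficients are square summable against every weight alpha_n^j. H, A and B multiply
  the coefficients by alpha_n and shift them down or up, so since alpha is increasing with
  alpha_{n+1} <= (1 + r / alpha_1) alpha_n for n >= 1 each of them maps D^infinity(H_f^alpha) into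
  itself, and conjugation by the injective T0 carries this invariance over to T0 D^infinity(H_f^alpha).
\<close>

subclass (in chilbert_space) banach ..

section \<open>Complex inner product spaces\<close>

lemma scaleC_zero_left [simp]: "(0::complex) *\<^sub>C (x::'a::complex_vector) = 0"
  by (metis add_cancel_right_right add_0 scaleC_add_left)

lemma cinner_zero_left [simp]: "cinner 0 (y::'a::complex_inner) = 0"
  by (metis add_cancel_right_right add_0 cinner_add_left)

lemma cinner_zero_right [simp]: "cinner (y::'a::complex_inner) 0 = 0"
  by (metis cinner_commute cinner_zero_left complex_cnj_zero)

lemma cinner_add_right: "cinner (x::'a::complex_inner) (y + z) = cinner x y + cinner x z"
  by (metis cinner_add_left cinner_commute complex_cnj_add)

lemma cinner_scaleC_right: "cinner (x::'a::complex_inner) (a *\<^sub>C y) = cnj a * cinner x y"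
  by (metis cinner_commute cinner_scaleC_left complex_cnj_mult)

lemma cinner_minus_left: "cinner (- x::'a::complex_inner) y = - cinner x y"
  by (metis add.right_inverse add_eq_0_iff cinner_add_left cinner_zero_left)

lemma cinner_diff_left: "cinner (x - z::'a::complex_inner) y = cinner x y - cinner z y"
  by (simp only: diff_conv_add_uminus cinner_add_left cinner_minus_left)

lemma cinner_diff_right: "cinner (x::'a::complex_inner) (y - z) = cinner x y - cinner x z"
  by (metis cinner_commute cinner_diff_left complex_cnj_diff)

lemma cinner_sum_left: "cinner (sum g F::'a::complex_inner) y = (\<Sum>i\<in>F. cinner (g i) y)"
  by (induction F rule: infinite_finite_induct) (auto simp: cinner_add_left)

lemma cinner_sum_right: "cinner (y::'a::complex_inner) (sum g F) = (\<Sum>i\<in>F. cinner y (g i))"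
  by (induction F rule: infinite_finite_induct) (auto simp: cinner_add_right)

lemma cinner_scaleR_left: "cinner (r *\<^sub>R x) (y::'a::complex_inner) = r *\<^sub>R cinner x y"
  by (simp add: scaleR_scaleC cinner_scaleC_left scaleR_conv_of_real)

lemma norm_scaleC: "norm (a *\<^sub>C (x::'a::complex_inner)) = cmod a * norm x"
proof -
  have "cinner (a *\<^sub>C x) (a *\<^sub>C x) = (a * cnj a) * cinner x x"
    by (simp add: cinner_scaleC_left cinner_scaleC_right mult.assoc)
  also have "\<dots> = complex_of_real ((cmod a * norm x)\<^sup>2)"
    by (simp only: complex_norm_square cinner_norm power_mult_distrib of_real_mult)
  finally have "cinner (a *\<^sub>C x) (a *\<^sub>C x) = complex_of_real ((cmod a * norm x)\<^sup>2)" .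
  then have "(norm (a *\<^sub>C x))\<^sup>2 = (cmod a * norm x)\<^sup>2"
    by (metis cinner_norm of_real_eq_iff)
  then show ?thesis by (simp add: power2_eq_iff_nonneg)
qed

lemma bounded_linear_scaleC: "bounded_linear (\<lambda>x::'a::complex_inner. a *\<^sub>C x)"
proof (rule bounded_linear_intro[where K="cmod a"])
  show "a *\<^sub>C (x + y) = a *\<^sub>C x + a *\<^sub>C y" for x y :: 'a by (rule scaleC_add_right)
  show "a *\<^sub>C (r *\<^sub>R x) = r *\<^sub>R (a *\<^sub>C x)" for r and x :: 'a
    by (simp add: scaleR_scaleC scaleC_scaleC mult.commute)
  show "norm (a *\<^sub>C x) \<le> norm x * cmod a" for x :: 'a by (simp add: norm_scaleC mult.commute)
qed

lemma norm_cinner_le: "cmod (cinner (x::'a::complex_inner) v) \<le> norm x * norm v"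
proof (cases "v = 0")
  case True then show ?thesis by simp
next
  case False
  define t where "t = cinner x v / cinner v v"
  define w where "w = x - t *\<^sub>C v"
  have vv: "cinner v v = complex_of_real ((norm v)\<^sup>2)" by (rule cinner_norm)
  have nv: "norm v > 0" using False by simp
  have wv: "cinner w v = 0"
    using nv by (simp add: w_def t_def cinner_diff_left cinner_scaleC_left vv)
  have vw: "cinner v w = 0" using wv by (metis cinner_commute complex_cnj_zero)
  have "cinner x x = cinner w w + t * cnj t * cinner v v"
    using wv vw unfolding w_def
    by (simp add: cinner_diff_left cinner_diff_right cinner_scaleC_left cinner_scaleC_right
        algebra_simps)
  then have "(norm x)\<^sup>2 = (norm w)\<^sup>2 + (cmod t)\<^sup>2 * (norm v)\<^sup>2"
    by (simp add: cinner_norm complex_mult_cnj vv cmod_power2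
        flip: of_real_mult of_real_add of_real_power)
  then have le: "(cmod t)\<^sup>2 * (norm v)\<^sup>2 \<le> (norm x)\<^sup>2" by simp
  have "cmod (cinner x v) = cmod t * (norm v)\<^sup>2"
    using nv by (simp add: t_def vv norm_divide norm_power)
  then have "(cmod (cinner x v))\<^sup>2 = ((cmod t)\<^sup>2 * (norm v)\<^sup>2) * (norm v)\<^sup>2"
    by (simp add: power_mult_distrib power2_eq_square)
  also have "\<dots> \<le> (norm x * norm v)\<^sup>2"
    using mult_right_mono[OF le, of "(norm v)\<^sup>2"] by (simp add: power_mult_distrib)
  finally show ?thesis by (metis power2_le_imp_le norm_ge_zero mult_nonneg_nonneg)
qed

lemma bounded_linear_cinner_left: "bounded_linear (\<lambda>x::'a::complex_inner. cinner x v)"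
proof (rule bounded_linear_intro[where K="norm v"])
  show "cinner (x + y) v = cinner x v + cinner y v" for x y :: 'a by (rule cinner_add_left)
  show "cinner (r *\<^sub>R x) v = r *\<^sub>R cinner x v" for r and x :: 'a by (rule cinner_scaleR_left)
  show "norm (cinner x v) \<le> norm x * norm v" for x :: 'a by (rule norm_cinner_le)
qed

section \<open>Orthonormal series\<close>

definition orthonormal :: "(nat \<Rightarrow> 'a::complex_inner) \<Rightarrow> bool" where
  "orthonormal e \<longleftrightarrow> (\<forall>n m. cinner (e n) (e m) = (if n = m then 1 else 0))"

lemma is_onb_orthonormal: "is_onb f \<Longrightarrow> orthonormal f"
  by (simp add: is_onb_def orthonormal_def)

lemma orthonormal_Suc: "orthonormal e \<Longrightarrow> orthonormal (\<lambda>n. e (Suc n))"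
  by (simp add: orthonormal_def)

lemma norm_sum_orthonormal_sq:
  assumes e: "orthonormal e" and F: "finite F"
  shows "(norm (\<Sum>n\<in>F. c n *\<^sub>C e n))\<^sup>2 = (\<Sum>n\<in>F. (cmod (c n))\<^sup>2)"
proof -
  have inner: "(\<Sum>n\<in>F. c n * cinner (e n) (e m)) = c m" if "m \<in> F" for m
  proof -
    have "(\<Sum>n\<in>F. c n * cinner (e n) (e m)) = (\<Sum>n\<in>F. if m = n then c m else 0)"
      using e by (intro sum.cong) (auto simp: orthonormal_def)
    also have "\<dots> = c m" using that F by simp
    finally show ?thesis .
  qed
  have "cinner (\<Sum>n\<in>F. c n *\<^sub>C e n) (\<Sum>n\<in>F. c n *\<^sub>C e n)
        = (\<Sum>m\<in>F. cnj (c m) * (\<Sum>n\<in>F. c n * cinner (e n) (e m)))"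
    by (simp only: cinner_sum_left cinner_sum_right cinner_scaleC_left cinner_scaleC_right)
  also have "\<dots> = (\<Sum>n\<in>F. c n * cnj (c n))"
    using inner by (simp add: mult.commute)
  also have "\<dots> = complex_of_real (\<Sum>n\<in>F. (cmod (c n))\<^sup>2)"
    by (simp only: of_real_sum complex_norm_square)
  finally show ?thesis by (metis cinner_norm of_real_eq_iff)
qed

lemma summable_orthonormal_series:
  fixes e :: "nat \<Rightarrow> 'a::chilbert_space"
  assumes e: "orthonormal e" and c: "summable (\<lambda>n. (cmod (c n))\<^sup>2)"
  shows "summable (\<lambda>n. c n *\<^sub>C e n)"
  unfolding summable_Cauchy
proof (intro allI impI)
  fix \<epsilon> :: real assume "\<epsilon> > 0"
  then obtain N where N: "\<forall>m\<ge>N. \<forall>n. norm (\<Sum>k\<in>{m..<n}. (cmod (c k))\<^sup>2) < \<epsilon>\<^sup>2"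
    using c unfolding summable_Cauchy by (meson zero_less_power)
  have "norm (\<Sum>k\<in>{m..<n}. c k *\<^sub>C e k) < \<epsilon>" if "m \<ge> N" for m n
  proof (rule power_less_imp_less_base)
    show "(norm (\<Sum>k\<in>{m..<n}. c k *\<^sub>C e k))\<^sup>2 < \<epsilon>\<^sup>2"
      using N that norm_sum_orthonormal_sq[OF e, of "{m..<n}" c] by (simp add: sum_nonneg)
  qed (use \<open>\<epsilon> > 0\<close> in simp)
  then show "\<exists>N. \<forall>m\<ge>N. \<forall>n. norm (\<Sum>k\<in>{m..<n}. c k *\<^sub>C e k) < \<epsilon>" by blast
qed

lemma cinner_orthonormal_series:
  fixes e :: "nat \<Rightarrow> 'a::chilbert_space"
  assumes e: "orthonormal e" and c: "summable (\<lambda>n. (cmod (c n))\<^sup>2)"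
  shows "cinner (\<Sum>n. c n *\<^sub>C e n) (e m) = c m"
proof -
  have "(\<lambda>n. c n * cinner (e n) (e m)) sums cinner (\<Sum>n. c n *\<^sub>C e n) (e m)"
    using bounded_linear.sums[OF bounded_linear_cinner_left
        summable_sums[OF summable_orthonormal_series[OF e c]]]
    by (simp add: cinner_scaleC_left)
  moreover have "(\<lambda>n. c n * cinner (e n) (e m)) = (\<lambda>n. if n = m then c n else 0)"
    using e by (auto simp: orthonormal_def)
  ultimately show ?thesis using sums_single[of m c] sums_unique2 by metis
qed

lemma ser_op_iff:
  "(x, w) \<in> ser_op e c \<longleftrightarrow> summable (\<lambda>n. (cmod (c x n))\<^sup>2) \<and> w = (\<Sum>n. c x n *\<^sub>C e n)"
  by (auto simp: ser_op_def)

lemma cinner_ser_op: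
  fixes e :: "nat \<Rightarrow> 'a::chilbert_space"
  assumes "orthonormal e" and "(x, w) \<in> ser_op e c"
  shows "cinner w (e m) = c x m"
  using assms cinner_orthonormal_series by (auto simp: ser_op_iff)

lemma ser_op_shift:
  fixes e :: "nat \<Rightarrow> 'a::chilbert_space"
  assumes e: "orthonormal e"
  shows "ser_op (\<lambda>n. e (Suc n)) c = ser_op e (\<lambda>x. case_nat 0 (c x))"
proof -
  have "(\<Sum>n. c x n *\<^sub>C e (Suc n)) = (\<Sum>n. case_nat 0 (c x) n *\<^sub>C e n)"
    if c: "summable (\<lambda>n. (cmod (c x n))\<^sup>2)" for x
  proof -
    have "(\<lambda>n. c x n *\<^sub>C e (Suc n)) sums (\<Sum>n. c x n *\<^sub>C e (Suc n))"
      using summable_orthonormal_series[OF orthonormal_Suc[OF e] c] by (rule summable_sums)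
    then have "(\<lambda>n. case_nat 0 (c x) n *\<^sub>C e n) sums (\<Sum>n. c x n *\<^sub>C e (Suc n))"
      using sums_Suc_iff[of "\<lambda>n. case_nat 0 (c x) n *\<^sub>C e n"] by simp
    then show ?thesis by (simp add: sums_iff)
  qed
  moreover have "summable (\<lambda>n. (cmod (case_nat 0 (c x) n))\<^sup>2) \<longleftrightarrow> summable (\<lambda>n. (cmod (c x n))\<^sup>2)"
    for x
    by (subst summable_Suc_iff[symmetric]) simp
  ultimately show ?thesis by (auto simp: ser_op_def)
qed

section \<open>Linear operators as graphs\<close>

lemma summable_cmod_sq_add:
  assumes "summable (\<lambda>n. (cmod (a n))\<^sup>2)" and "summable (\<lambda>n. (cmod (b n))\<^sup>2)"
  shows "summable (\<lambda>n. (cmod (a n + b n))\<^sup>2)"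
proof (rule summable_comparison_test'[OF summable_add[OF summable_mult[OF assms(1), of 2]
        summable_mult[OF assms(2), of 2]]])
  fix n
  have "(cmod (a n + b n))\<^sup>2 \<le> (cmod (a n) + cmod (b n))\<^sup>2"
    by (simp add: norm_triangle_ineq power_mono)
  also have "\<dots> \<le> 2 * (cmod (a n))\<^sup>2 + 2 * (cmod (b n))\<^sup>2"
    using sum_squares_bound[of "cmod (a n)" "cmod (b n)"] by (simp add: power2_eq_square algebra_simps)
  finally show "norm ((cmod (a n + b n))\<^sup>2) \<le> 2 * (cmod (a n))\<^sup>2 + 2 * (cmod (b n))\<^sup>2"
    by simp
qed

lemma lin_op_ser_op:
  fixes e :: "nat \<Rightarrow> 'a::chilbert_space"
  assumes e: "orthonormal e"
    and add: "\<And>x y n. c (x + y) n = c x n + c y n"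
    and scale: "\<And>a x n. c (a *\<^sub>C x) n = a * c x n"
  shows "lin_op (ser_op e c)"
  unfolding lin_op_def
proof (intro conjI allI impI)
  have "c 0 n = 0" for n using add[of 0 0 n] by simp
  then show "(0, 0) \<in> ser_op e c" by (simp add: ser_op_iff)
  show "y = z" if "(x, y) \<in> ser_op e c" "(x, z) \<in> ser_op e c" for x y z
    using that by (simp add: ser_op_iff)
  show "(x + u, y + v) \<in> ser_op e c" if "(x, y) \<in> ser_op e c" "(u, v) \<in> ser_op e c" for x y u v
  proof -
    have cx: "summable (\<lambda>n. (cmod (c x n))\<^sup>2)" and y: "y = (\<Sum>n. c x n *\<^sub>C e n)"
      and cu: "summable (\<lambda>n. (cmod (c u n))\<^sup>2)" and v: "v = (\<Sum>n. c u n *\<^sub>C e n)"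
      using that by (simp_all add: ser_op_iff)
    have "(\<lambda>n. c (x + u) n *\<^sub>C e n) sums (y + v)"
      using sums_add[OF summable_sums[OF summable_orthonormal_series[OF e cx]]
          summable_sums[OF summable_orthonormal_series[OF e cu]]]
      by (simp add: add scaleC_add_left y v)
    then show ?thesis using summable_cmod_sq_add[OF cx cu] by (simp add: ser_op_iff add sums_iff)
  qed
  show "(a *\<^sub>C x, a *\<^sub>C y) \<in> ser_op e c" if "(x, y) \<in> ser_op e c" for a x y
  proof -
    have cx: "summable (\<lambda>n. (cmod (c x n))\<^sup>2)" and y: "y = (\<Sum>n. c x n *\<^sub>C e n)"
      using that by (simp_all add: ser_op_iff)
    have "(\<lambda>n. c (a *\<^sub>C x) n *\<^sub>C e n) sums (a *\<^sub>C y)"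
      using bounded_linear.sums[OF bounded_linear_scaleC
          summable_sums[OF summable_orthonormal_series[OF e cx]], of a]
      by (simp add: scale scaleC_scaleC y)
    moreover have "summable (\<lambda>n. (cmod (c (a *\<^sub>C x) n))\<^sup>2)"
      using summable_mult[OF cx, of "(cmod a)\<^sup>2"] by (simp add: scale norm_mult power_mult_distrib)
    ultimately show ?thesis by (simp add: ser_op_iff sums_iff)
  qed
qed

lemma lin_op_T_op:
  fixes f \<phi> :: "nat \<Rightarrow> 'a::chilbert_space"
  shows "orthonormal f \<Longrightarrow> lin_op (T_op f \<phi>)"
  unfolding T_op_def by (rule lin_op_ser_op) (simp_all add: cinner_add_left cinner_scaleC_left)

lemma lin_op_H_op:
  fixes f :: "nat \<Rightarrow> 'a::chilbert_space"
  shows "orthonormal f \<Longrightarrow> lin_op (H_op \<alpha> f)"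
  unfolding H_op_def
  by (rule lin_op_ser_op) (simp_all add: cinner_add_left cinner_scaleC_left algebra_simps)

lemma Domain_T_op: "Domain (T_op f \<phi>) = seq_dom \<phi>"
  by (auto simp: T_op_def ser_op_def seq_dom_def)

lemma csubspace_Domain: "lin_op T \<Longrightarrow> csubspace (Domain T)"
  unfolding lin_op_def csubspace_def by blast

lemma lin_op_Id: "lin_op Id"
  by (simp add: lin_op_def)

lemma lin_op_relcomp:
  assumes "lin_op R" and "lin_op S"
  shows "lin_op (R O S)"
  unfolding lin_op_def
proof (intro conjI allI impI)
  show "y = z" if "(x, y) \<in> R O S" "(x, z) \<in> R O S" for x y z
    using that assms unfolding lin_op_def by (metis relcompE prod.inject)
  show "(0, 0) \<in> R O S" using assms unfolding lin_op_def by (meson relcompI)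
  show "(x + u, y + v) \<in> R O S" if xy: "(x, y) \<in> R O S" and uv: "(u, v) \<in> R O S" for x y u v
  proof -
    obtain a b where "(x, a) \<in> R" "(a, y) \<in> S" "(u, b) \<in> R" "(b, v) \<in> S"
      using xy uv by blast
    then show ?thesis using assms unfolding lin_op_def by (meson relcompI)
  qed
  show "(c *\<^sub>C x, c *\<^sub>C y) \<in> R O S" if xy: "(x, y) \<in> R O S" for c x y
  proof -
    obtain a where "(x, a) \<in> R" "(a, y) \<in> S" using xy by blast
    then show ?thesis using assms unfolding lin_op_def by (meson relcompI)
  qed
qed

lemma lin_op_relpow: "lin_op R \<Longrightarrow> lin_op (R ^^ n)"
  by (induction n) (simp_all add: lin_op_Id lin_op_relcomp)

lemma csubspace_Dinf: "lin_op H \<Longrightarrow> csubspace (Dinf H)"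
proof -
  assume "lin_op H"
  then have "csubspace (Domain (H ^^ n))" for n by (intro csubspace_Domain lin_op_relpow)
  then show ?thesis by (simp add: csubspace_def Dinf_def)
qed

lemma cspan_minimal:
  assumes S: "csubspace S" and B: "B \<subseteq> S"
  shows "cspan B \<subseteq> S"
proof
  fix x assume "x \<in> cspan B"
  then obtain F c where F: "finite F" "F \<subseteq> B" and x: "x = (\<Sum>v\<in>F. c v *\<^sub>C v)"
    unfolding cspan_def by blast
  from F have "(\<Sum>v\<in>F. c v *\<^sub>C v) \<in> S"
    by (induction F rule: finite_induct) (use S B in \<open>auto simp: csubspace_def\<close>)
  then show "x \<in> S" using x by simp
qed

lemma lin_op_op_restrict: "lin_op T \<Longrightarrow> csubspace D \<Longrightarrow> lin_op (op_restrict T D)"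
  unfolding lin_op_def csubspace_def op_restrict_def by blast

lemma lin_op_op_inv:
  "lin_op T \<Longrightarrow> (\<And>x z y. (x, y) \<in> T \<Longrightarrow> (z, y) \<in> T \<Longrightarrow> x = z) \<Longrightarrow> lin_op (op_inv T)"
  unfolding lin_op_def op_inv_def by blast

lemma lin_op_op_closure:
  fixes R :: "'a::complex_inner lop"
  assumes R: "lin_op R" and S: "lin_op S" and RS: "op_closure R \<subseteq> S"
  shows "lin_op (op_closure R)"
  unfolding lin_op_def op_closure_def
proof (intro conjI allI impI)
  show "y = z" if "(x, y) \<in> closure R" "(x, z) \<in> closure R" for x y z
    using that RS S unfolding lin_op_def op_closure_def by blast
  show "(0, 0) \<in> closure R" using R closure_subset by (auto simp: lin_op_def)
  have "(\<lambda>z. fst z + snd z) ` closure (R \<times> R) \<subseteq> closure R"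
  proof (rule image_closure_subset)
    have "(\<lambda>z. fst z + snd z) ` (R \<times> R) \<subseteq> R" using R unfolding lin_op_def by auto
    then show "(\<lambda>z. fst z + snd z) ` (R \<times> R) \<subseteq> closure R" using closure_subset by blast
  qed (auto intro!: continuous_intros)
  moreover have "((x, y), (u, v)) \<in> closure (R \<times> R)"
    if "(x, y) \<in> closure R" "(u, v) \<in> closure R" for x y u v
    using that by (simp add: closure_Times)
  ultimately show "(x + u, y + v) \<in> closure R"
    if "(x, y) \<in> closure R" "(u, v) \<in> closure R" for x y u v
    using that by (metis (no_types, lifting) image_subset_iff fst_conv snd_conv plus_prod_def)
  show "(a *\<^sub>C x, a *\<^sub>C y) \<in> closure R" if "(x, y) \<in> closure R" for a x y
  proof -
    have "(\<lambda>z. (a *\<^sub>C fst z, a *\<^sub>C snd z)) ` closure R \<subseteq> closure R"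
    proof (rule image_closure_subset)
      show "continuous_on (closure R) (\<lambda>z. (a *\<^sub>C fst z, a *\<^sub>C snd z))"
        by (intro linear_continuous_on bounded_linear_Pair
            bounded_linear_compose[OF bounded_linear_scaleC bounded_linear_fst]
            bounded_linear_compose[OF bounded_linear_scaleC bounded_linear_snd])
      have "(\<lambda>z. (a *\<^sub>C fst z, a *\<^sub>C snd z)) ` R \<subseteq> R" using R unfolding lin_op_def by auto
      then show "(\<lambda>z. (a *\<^sub>C fst z, a *\<^sub>C snd z)) ` R \<subseteq> closure R" using closure_subset by blast
    qed simp
    then show ?thesis using that by auto
  qed
qed

section \<open>Weighted square summability\<close>

definition weighted_sq_summable :: "(nat \<Rightarrow> real) \<Rightarrow> nat \<Rightarrow> (nat \<Rightarrow> complex) \<Rightarrow> bool" where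
  "weighted_sq_summable \<alpha> j c \<longleftrightarrow> summable (\<lambda>n. (\<alpha> n ^ j * cmod (c n))\<^sup>2)"

lemma weighted_sq_summable_0: "weighted_sq_summable \<alpha> 0 c \<longleftrightarrow> summable (\<lambda>n. (cmod (c n))\<^sup>2)"
  by (simp add: weighted_sq_summable_def)

lemma weighted_sq_summable_mult_weight:
  assumes "\<And>n. 0 \<le> \<alpha> n"
  shows "weighted_sq_summable \<alpha> j (\<lambda>n. complex_of_real (\<alpha> n) * c n)
     \<longleftrightarrow> weighted_sq_summable \<alpha> (Suc j) c"
  using assms by (simp add: weighted_sq_summable_def norm_mult mult_ac)

lemma weighted_sq_summable_shift_down:
  assumes nonneg: "\<And>n. 0 \<le> \<alpha> n" and mono: "mono \<alpha>"
    and c: "weighted_sq_summable \<alpha> (Suc j) c"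
  shows "weighted_sq_summable \<alpha> j (\<lambda>n. complex_of_real (\<alpha> (Suc n)) * c (Suc n))"
  unfolding weighted_sq_summable_def
proof (rule summable_comparison_test')
  show "summable (\<lambda>n. (\<alpha> (Suc n) ^ Suc j * cmod (c (Suc n)))\<^sup>2)"
    using c unfolding weighted_sq_summable_def
    by (simp only: summable_Suc_iff[of "\<lambda>n. (\<alpha> n ^ Suc j * cmod (c n))\<^sup>2"])
  fix n
  have "\<alpha> n ^ j \<le> \<alpha> (Suc n) ^ j"
    using mono nonneg by (simp add: power_mono mono_iff_le_Suc)
  then have "\<alpha> n ^ j * (\<alpha> (Suc n) * cmod (c (Suc n)))
      \<le> \<alpha> (Suc n) ^ j * (\<alpha> (Suc n) * cmod (c (Suc n)))"
    by (rule mult_right_mono) (simp add: nonneg)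
  also have "\<dots> = \<alpha> (Suc n) ^ Suc j * cmod (c (Suc n))"
    by (simp add: mult_ac)
  finally have "\<alpha> n ^ j * (\<alpha> (Suc n) * cmod (c (Suc n))) \<le> \<alpha> (Suc n) ^ Suc j * cmod (c (Suc n))" .
  then show "norm ((\<alpha> n ^ j * cmod (complex_of_real (\<alpha> (Suc n)) * c (Suc n)))\<^sup>2)
      \<le> (\<alpha> (Suc n) ^ Suc j * cmod (c (Suc n)))\<^sup>2"
    using nonneg by (simp add: norm_mult power_mono)
qed

lemma weighted_sq_summable_shift_up:
  assumes nonneg: "\<And>n. 0 \<le> \<alpha> n" and growth: "\<And>n. n \<ge> N \<Longrightarrow> \<alpha> (Suc n) \<le> K * \<alpha> n"
    and c: "weighted_sq_summable \<alpha> (Suc j) c"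
  shows "weighted_sq_summable \<alpha> j (case_nat 0 (\<lambda>n. complex_of_real (\<alpha> (Suc n)) * c n))"
  unfolding weighted_sq_summable_def
proof (subst summable_Suc_iff[symmetric], rule summable_comparison_test')
  show "summable (\<lambda>n. (K ^ Suc j)\<^sup>2 * (\<alpha> n ^ Suc j * cmod (c n))\<^sup>2)"
    using c by (simp add: weighted_sq_summable_def)
  fix n assume "n \<ge> N"
  then have "\<alpha> (Suc n) ^ Suc j \<le> (K * \<alpha> n) ^ Suc j"
    using growth nonneg by (intro power_mono) auto
  then have "\<alpha> (Suc n) ^ Suc j * cmod (c n) \<le> (K * \<alpha> n) ^ Suc j * cmod (c n)"
    by (rule mult_right_mono) simp
  also have "\<dots> = K ^ Suc j * (\<alpha> n ^ Suc j * cmod (c n))"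
    by (simp only: power_mult_distrib mult.assoc)
  finally have "\<alpha> (Suc n) ^ Suc j * cmod (c n) \<le> K ^ Suc j * (\<alpha> n ^ Suc j * cmod (c n))" .
  then have "(\<alpha> (Suc n) ^ Suc j * cmod (c n))\<^sup>2 \<le> (K ^ Suc j)\<^sup>2 * (\<alpha> n ^ Suc j * cmod (c n))\<^sup>2"
    using nonneg by (simp add: power_mono flip: power_mult_distrib)
  then show "norm ((\<alpha> (Suc n) ^ j
        * cmod (case Suc n of 0 \<Rightarrow> 0 | Suc n \<Rightarrow> complex_of_real (\<alpha> (Suc n)) * c n))\<^sup>2)
      \<le> (K ^ Suc j)\<^sup>2 * (\<alpha> n ^ Suc j * cmod (c n))\<^sup>2"
    using nonneg by (simp add: norm_mult mult_ac)
qed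

section \<open>The smooth vectors of H\<close>

lemma Domain_relpow_Suc: "x \<in> Domain (R ^^ Suc k) \<longleftrightarrow> (\<exists>w. (x, w) \<in> R \<and> w \<in> Domain (R ^^ k))"
proof
  assume "x \<in> Domain (R ^^ Suc k)"
  then obtain z where "(x, z) \<in> R ^^ Suc k" by blast
  then show "\<exists>w. (x, w) \<in> R \<and> w \<in> Domain (R ^^ k)" by (blast elim: relpow_Suc_E2)
qed (blast intro: relpow_Suc_I2)

lemma Domain_H_op_relpow:
  fixes f :: "nat \<Rightarrow> 'a::chilbert_space"
  assumes nonneg: "\<And>n. 0 \<le> \<alpha> n" and f: "orthonormal f"
  shows "x \<in> Domain (H_op \<alpha> f ^^ k)
    \<longleftrightarrow> (\<forall>j<k. weighted_sq_summable \<alpha> (Suc j) (\<lambda>n. cinner x (f n)))"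
proof (induction k arbitrary: x)
  case 0
  show ?case by simp
next
  case (Suc k)
  let ?c = "\<lambda>x n. cinner x (f n)"
  have H: "?c w = (\<lambda>n. complex_of_real (\<alpha> n) * ?c x n)" if "(x, w) \<in> H_op \<alpha> f" for w
    using cinner_ser_op[OF f that[unfolded H_op_def]] by blast
  have dom: "x \<in> Domain (H_op \<alpha> f) \<longleftrightarrow> weighted_sq_summable \<alpha> 1 (?c x)"
    using weighted_sq_summable_mult_weight[OF nonneg, where j=0 and c="?c x"]
    by (auto simp: H_op_def ser_op_iff weighted_sq_summable_0)
  have "x \<in> Domain (H_op \<alpha> f ^^ Suc k)
      \<longleftrightarrow> (\<exists>w. (x, w) \<in> H_op \<alpha> f \<and> w \<in> Domain (H_op \<alpha> f ^^ k))"
    by (rule Domain_relpow_Suc)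
  also have "\<dots> \<longleftrightarrow> x \<in> Domain (H_op \<alpha> f) \<and>
      (\<forall>j<k. weighted_sq_summable \<alpha> (Suc j) (\<lambda>n. complex_of_real (\<alpha> n) * ?c x n))"
  proof
    assume "\<exists>w. (x, w) \<in> H_op \<alpha> f \<and> w \<in> Domain (H_op \<alpha> f ^^ k)"
    then obtain w where xw: "(x, w) \<in> H_op \<alpha> f" and "w \<in> Domain (H_op \<alpha> f ^^ k)" by blast
    then show "x \<in> Domain (H_op \<alpha> f) \<and>
      (\<forall>j<k. weighted_sq_summable \<alpha> (Suc j) (\<lambda>n. complex_of_real (\<alpha> n) * ?c x n))"
      using Suc.IH H[OF xw] by auto
  next
    assume "x \<in> Domain (H_op \<alpha> f) \<and>
      (\<forall>j<k. weighted_sq_summable \<alpha> (Suc j) (\<lambda>n. complex_of_real (\<alpha> n) * ?c x n))"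
    moreover from this obtain w where xw: "(x, w) \<in> H_op \<alpha> f" by blast
    ultimately show "\<exists>w. (x, w) \<in> H_op \<alpha> f \<and> w \<in> Domain (H_op \<alpha> f ^^ k)"
      using Suc.IH H[OF xw] by auto
  qed
  also have "\<dots> \<longleftrightarrow> (\<forall>j<Suc k. weighted_sq_summable \<alpha> (Suc j) (?c x))"
    by (auto simp: dom weighted_sq_summable_mult_weight[OF nonneg] less_Suc_eq_0_disj)
  finally show ?case .
qed

lemma Dinf_H_op_iff:
  fixes f :: "nat \<Rightarrow> 'a::chilbert_space"
  assumes "\<And>n. 0 \<le> \<alpha> n" and "orthonormal f"
  shows "x \<in> Dinf (H_op \<alpha> f) \<longleftrightarrow> (\<forall>j. weighted_sq_summable \<alpha> (Suc j) (\<lambda>n. cinner x (f n)))"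
proof -
  let ?P = "\<lambda>j. weighted_sq_summable \<alpha> (Suc j) (\<lambda>n. cinner x (f n))"
  have "x \<in> Dinf (H_op \<alpha> f) \<longleftrightarrow> (\<forall>k\<in>{1..}. \<forall>j<k. ?P j)"
    by (simp add: Dinf_def Domain_H_op_relpow[OF assms])
  also have "\<dots> \<longleftrightarrow> (\<forall>j. ?P j)"
  proof
    assume P: "\<forall>k\<in>{1..}. \<forall>j<k. ?P j"
    show "\<forall>j. ?P j"
    proof
      fix j :: nat
      have "Suc j \<in> {1..}" by simp
      then show "?P j" using P by blast
    qed
  qed blast
  finally show ?thesis .
qed

lemma orthonormal_in_Dinf:
  fixes f :: "nat \<Rightarrow> 'a::chilbert_space"
  assumes nonneg: "\<And>n. 0 \<le> \<alpha> n" and f: "orthonormal f"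
  shows "f k \<in> Dinf (H_op \<alpha> f)"
proof -
  have "(\<lambda>n. (\<alpha> n ^ j * cmod (cinner (f k) (f n)))\<^sup>2) = (\<lambda>n. if n = k then (\<alpha> n ^ j)\<^sup>2 else 0)"
    for j using f by (auto simp: orthonormal_def)
  then have "summable (\<lambda>n. (\<alpha> n ^ j * cmod (cinner (f k) (f n)))\<^sup>2)" for j by simp
  then show ?thesis unfolding Dinf_H_op_iff[OF nonneg f] weighted_sq_summable_def by blast
qed

lemma in_L_ser_op_Dinf:
  fixes f :: "nat \<Rightarrow> 'a::chilbert_space"
  assumes nonneg: "\<And>n. 0 \<le> \<alpha> n" and f: "orthonormal f"
    and c: "\<And>x. \<forall>j. weighted_sq_summable \<alpha> (Suc j) (\<lambda>n. cinner x (f n))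
      \<Longrightarrow> \<forall>j. weighted_sq_summable \<alpha> j (c x)"
  shows "in_L (ser_op f c) (Dinf (H_op \<alpha> f))"
  unfolding in_L_def
proof
  show "Dinf (H_op \<alpha> f) \<subseteq> Domain (ser_op f c)"
  proof
    fix x assume "x \<in> Dinf (H_op \<alpha> f)"
    then have "weighted_sq_summable \<alpha> 0 (c x)"
      using c by (simp add: Dinf_H_op_iff[OF nonneg f])
    then have "(x, \<Sum>n. c x n *\<^sub>C f n) \<in> ser_op f c"
      by (simp add: ser_op_iff weighted_sq_summable_0)
    then show "x \<in> Domain (ser_op f c)" by blast
  qed
  show "ser_op f c `` Dinf (H_op \<alpha> f) \<subseteq> Dinf (H_op \<alpha> f)"
  proof clarify
    fix x w assume "(x, w) \<in> ser_op f c" and x: "x \<in> Dinf (H_op \<alpha> f)"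
    then have "(\<lambda>n. cinner w (f n)) = c x" using cinner_ser_op[OF f] by blast
    then show "w \<in> Dinf (H_op \<alpha> f)" using c x by (simp add: Dinf_H_op_iff[OF nonneg f])
  qed
qed

lemma in_L_H_op_Dinf:
  fixes f :: "nat \<Rightarrow> 'a::chilbert_space"
  assumes nonneg: "\<And>n. 0 \<le> \<alpha> n" and f: "orthonormal f"
  shows "in_L (H_op \<alpha> f) (Dinf (H_op \<alpha> f))"
proof -
  have "in_L (ser_op f (\<lambda>x n. complex_of_real (\<alpha> n) * cinner x (f n))) (Dinf (H_op \<alpha> f))"
    by (rule in_L_ser_op_Dinf[OF nonneg f]) (simp add: weighted_sq_summable_mult_weight[OF nonneg])
  then show ?thesis by (simp only: H_op_def)
qed

lemma in_L_A_op_Dinf: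
  fixes f :: "nat \<Rightarrow> 'a::chilbert_space"
  assumes nonneg: "\<And>n. 0 \<le> \<alpha> n" and mono: "mono \<alpha>" and f: "orthonormal f"
  shows "in_L (A_op \<alpha> f) (Dinf (H_op \<alpha> f))"
proof -
  have "in_L (ser_op f (\<lambda>x n. complex_of_real (\<alpha> (Suc n)) * cinner x (f (Suc n))))
      (Dinf (H_op \<alpha> f))"
    using weighted_sq_summable_shift_down[OF nonneg mono]
    by (intro in_L_ser_op_Dinf[OF nonneg f]) blast
  then show ?thesis by (simp only: A_op_def)
qed

lemma in_L_B_op_Dinf:
  fixes f :: "nat \<Rightarrow> 'a::chilbert_space"
  assumes nonneg: "\<And>n. 0 \<le> \<alpha> n" and growth: "\<And>n. n \<ge> N \<Longrightarrow> \<alpha> (Suc n) \<le> K * \<alpha> n"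
    and f: "orthonormal f"
  shows "in_L (B_op \<alpha> f) (Dinf (H_op \<alpha> f))"
proof -
  have "in_L (ser_op f (\<lambda>x. case_nat 0 (\<lambda>n. complex_of_real (\<alpha> (Suc n)) * cinner x (f n))))
      (Dinf (H_op \<alpha> f))"
    using weighted_sq_summable_shift_up[where \<alpha>=\<alpha> and N=N and K=K, OF nonneg growth]
    by (intro in_L_ser_op_Dinf[OF nonneg f]) blast
  then show ?thesis by (simp only: B_op_def ser_op_shift[OF f])
qed

section \<open>Constructing pairs from closed restrictions\<close>

lemma dense_set_mono: "dense_set A \<Longrightarrow> A \<subseteq> B \<Longrightarrow> dense_set B"
  unfolding dense_set_def by (metis closure_mono top.extremum_uniqueI)

lemma adjoint_antimono: "A \<subseteq> B \<Longrightarrow> adjoint B \<subseteq> adjoint A"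
  unfolding adjoint_def by blast

lemma constructing_pair_op_closure:
  fixes f :: "nat \<Rightarrow> 'a::complex_inner"
  assumes cp: "constructing_pair f S chi"
    and R: "lin_op R" and RS: "op_closure R \<subseteq> S"
    and basis: "range f \<subseteq> Domain R" and range: "dense_set (Range R)"
  shows "constructing_pair f (op_closure R) chi"
proof -
  let ?T = "op_closure R"
  have S: "lin_op S" and S_inj: "lin_op (op_inv S)"
    and onb: "is_onb f" and adj: "\<And>n. f n \<in> Domain (adjoint (op_inv S))"
    and graph: "\<And>n. (f n, chi n) \<in> S"
    using cp by (simp_all add: constructing_pair_def closed_op_def)
  have RT: "R \<subseteq> ?T" by (simp add: op_closure_def closure_subset)
  have T: "lin_op ?T" by (rule lin_op_op_closure[OF R S RS])
  have "lin_op (op_inv ?T)"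
  proof (rule lin_op_op_inv[OF T])
    fix x z y assume "(x, y) \<in> ?T" "(z, y) \<in> ?T"
    then show "x = z" using S_inj RS unfolding lin_op_def op_inv_def by blast
  qed
  moreover have "closed_op ?T" using T by (simp add: closed_op_def op_closure_def)
  moreover have "densely_defined ?T"
  proof -
    have "cspan (range f) \<subseteq> Domain R" by (rule cspan_minimal[OF csubspace_Domain[OF R] basis])
    then have "cspan (range f) \<subseteq> Domain ?T" using RT by blast
    then show ?thesis
      unfolding densely_defined_def
      by (rule dense_set_mono[rotated]) (use onb in \<open>simp add: is_onb_def\<close>)
  qed
  moreover have "densely_defined (op_inv ?T)"
  proof -
    have "Range R \<subseteq> Domain (op_inv ?T)" using RT by (auto simp: op_inv_def)
    then show ?thesis unfolding densely_defined_def by (rule dense_set_mono[OF range])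
  qed
  moreover have "adjoint (op_inv S) \<subseteq> adjoint (op_inv ?T)"
    using RS by (intro adjoint_antimono) (auto simp: op_inv_def)
  moreover have "(f n, chi n) \<in> ?T" for n
  proof -
    obtain y where y: "(f n, y) \<in> ?T" using basis RT by blast
    then have "y = chi n" using RS graph S unfolding lin_op_def by blast
    then show ?thesis using y by simp
  qed
  ultimately show ?thesis using onb adj unfolding constructing_pair_def by blast
qed

lemma in_L_conjugate:
  assumes X: "in_L X D" and D: "D \<subseteq> Domain T"
    and inj: "\<And>x z y. (x, y) \<in> T \<Longrightarrow> (z, y) \<in> T \<Longrightarrow> x = z"
  shows "in_L (op_comp3 T X (op_inv T)) (T `` D)"
  unfolding in_L_def op_comp3_def op_inv_def
proof
  show "T `` D \<subseteq> Domain (T\<inverse> O X O T)"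
  proof
    fix y assume "y \<in> T `` D"
    then obtain x where x: "x \<in> D" "(x, y) \<in> T" by blast
    then obtain w where w: "(x, w) \<in> X" and "w \<in> D" using X unfolding in_L_def by blast
    then obtain z where "(w, z) \<in> T" using D by blast
    then show "y \<in> Domain (T\<inverse> O X O T)" using x w by blast
  qed
  show "(T\<inverse> O X O T) `` (T `` D) \<subseteq> T `` D"
  proof
    fix z assume "z \<in> (T\<inverse> O X O T) `` (T `` D)"
    then obtain y x x' w where x: "x \<in> D" "(x, y) \<in> T" and x': "(x', y) \<in> T"
      and w: "(x', w) \<in> X" and z: "(w, z) \<in> T" by blast
    have "x' = x" using inj x' x by blast
    then have "w \<in> D" using X x w unfolding in_L_def by blast
    then show "z \<in> T `` D" using z by blast
  qed
qed

lemma constructing_pair_Dinf_restriction: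
  fixes \<phi> f :: "nat \<Rightarrow> 'a::chilbert_space"
  assumes cp: "constructing_pair f (op_closure (op_restrict (T_op f \<phi>) D)) \<phi>"
    and D: "D \<subseteq> seq_dom \<phi>"
    and nonneg: "\<And>n. 0 \<le> \<alpha> n" and mono: "mono \<alpha>"
    and growth: "\<And>n. n \<ge> N \<Longrightarrow> \<alpha> (Suc n) \<le> K * \<alpha> n"
    and Dinf_D: "Dinf (H_op \<alpha> f) \<subseteq> D" and dense: "dense_set (T_op f \<phi> `` Dinf (H_op \<alpha> f))"
  shows "let T0 = op_closure (op_restrict (T_op f \<phi>) (Dinf (H_op \<alpha> f)));
            D0 = T0 `` Dinf (H_op \<alpha> f)
        in constructing_pair f T0 \<phi>
           \<and> in_L (op_comp3 T0 (H_op \<alpha> f) (op_inv T0)) D0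
           \<and> in_L (op_comp3 T0 (A_op \<alpha> f) (op_inv T0)) D0
           \<and> in_L (op_comp3 T0 (B_op \<alpha> f) (op_inv T0)) D0"
proof -
  define Dn where "Dn = Dinf (H_op \<alpha> f)"
  define R where "R = op_restrict (T_op f \<phi>) Dn"
  define T0 where "T0 = op_closure R"
  have f: "orthonormal f"
    using cp by (simp add: constructing_pair_def is_onb_orthonormal)
  have R: "lin_op R"
    unfolding R_def Dn_def
    by (intro lin_op_op_restrict lin_op_T_op csubspace_Dinf lin_op_H_op f)
  have Dn_Domain: "Dn \<subseteq> Domain R"
  proof
    fix x assume x: "x \<in> Dn"
    then have "x \<in> Domain (T_op f \<phi>)" using Dinf_D D by (auto simp: Dn_def Domain_T_op)
    then show "x \<in> Domain R" using x by (auto simp: R_def op_restrict_def)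
  qed
  have "Range R = T_op f \<phi> `` Dn" by (auto simp: R_def op_restrict_def)
  then have range: "dense_set (Range R)" using dense by (simp add: Dn_def)
  have "op_closure R \<subseteq> op_closure (op_restrict (T_op f \<phi>) D)"
    unfolding op_closure_def R_def
    by (rule closure_mono) (use Dinf_D in \<open>auto simp: Dn_def op_restrict_def\<close>)
  moreover have "range f \<subseteq> Domain R"
    using orthonormal_in_Dinf[OF nonneg f] Dn_Domain by (auto simp: Dn_def)
  ultimately have T0: "constructing_pair f T0 \<phi>"
    unfolding T0_def using range by (rule constructing_pair_op_closure[OF cp R])
  have inj: "\<And>x z y. (x, y) \<in> T0 \<Longrightarrow> (z, y) \<in> T0 \<Longrightarrow> x = z"
    using T0 unfolding constructing_pair_def lin_op_def op_inv_def by blast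
  have "R \<subseteq> T0" by (simp add: T0_def op_closure_def closure_subset)
  then have Dn_T0: "Dn \<subseteq> Domain T0" using Dn_Domain by blast
  have H: "in_L (op_comp3 T0 (H_op \<alpha> f) (op_inv T0)) (T0 `` Dn)"
    using in_L_H_op_Dinf[OF nonneg f] Dn_T0 inj unfolding Dn_def by (rule in_L_conjugate)
  have A: "in_L (op_comp3 T0 (A_op \<alpha> f) (op_inv T0)) (T0 `` Dn)"
    using in_L_A_op_Dinf[OF nonneg mono f] Dn_T0 inj unfolding Dn_def by (rule in_L_conjugate)
  have B: "in_L (op_comp3 T0 (B_op \<alpha> f) (op_inv T0)) (T0 `` Dn)"
    using in_L_B_op_Dinf[where \<alpha>=\<alpha> and N=N and K=K, OF nonneg growth f] Dn_T0 inj
    unfolding Dn_def by (rule in_L_conjugate)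
  show ?thesis using T0 H A B by (simp add: T0_def R_def Dn_def)
qed

lemma Suc_le_mult_of_bounded_gaps:
  fixes \<alpha> :: "nat \<Rightarrow> real"
  assumes pos: "0 < \<alpha> 1" and mono: "mono \<alpha>" and r: "0 \<le> r"
    and gap: "\<alpha> (Suc n) \<le> \<alpha> n + r" and n: "n \<ge> 1"
  shows "\<alpha> (Suc n) \<le> (1 + r / \<alpha> 1) * \<alpha> n"
proof -
  have "r = (r / \<alpha> 1) * \<alpha> 1" using pos by simp
  also have "\<dots> \<le> (r / \<alpha> 1) * \<alpha> n"
    using mono n pos r by (intro mult_left_mono) (auto dest: monoD)
  finally show ?thesis using gap by (simp add: algebra_simps)
qed

theorem theorem4p7:
  fixes \<phi> \<psi> f g :: "nat \<Rightarrow> 'a::chilbert_space"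
    and D E :: "'a set"
    and \<alpha> :: "nat \<Rightarrow> real" and r :: real
  assumes biorth: "biorthogonal \<phi> \<psi>"
    and D_sub: "csubspace D" and D_dense: "dense_set D"
    and E_sub: "csubspace E" and E_dense: "dense_set E"
    and qb: "quasi_basis \<phi> \<psi> D E"
    and D_incl: "cspan (range \<psi>) \<subseteq> D" "D \<subseteq> seq_dom \<phi>"
    and E_incl: "cspan (range \<phi>) \<subseteq> E" "E \<subseteq> seq_dom \<psi>"
    and f_onb: "is_onb f"
    and Tf_sa: "self_adjoint (op_closure (op_restrict (T_op f \<phi>) D))"
    and Tf_pos: "positive_op (op_closure (op_restrict (T_op f \<phi>) D))"
    and Tf_cp: "constructing_pair f (op_closure (op_restrict (T_op f \<phi>) D)) \<phi>"
    and g_onb: "is_onb g"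
    and Tg_sa: "self_adjoint (op_closure (op_restrict (T_op g \<psi>) E))"
    and Tg_pos: "positive_op (op_closure (op_restrict (T_op g \<psi>) E))"
    and Tg_cp: "constructing_pair g (op_closure (op_restrict (T_op g \<psi>) E)) \<psi>"
    and r_pos: "r > 0"
    and alpha0: "0 \<le> \<alpha> 0"
    and alpha: "\<And>n. n \<ge> 1 \<Longrightarrow> \<alpha> 0 < \<alpha> n \<and> \<alpha> n < \<alpha> (Suc n) \<and> \<alpha> (Suc n) \<le> \<alpha> n + r"
  shows
    "(Dinf (H_op \<alpha> f) \<subseteq> D \<and> dense_set (T_op f \<phi> `` Dinf (H_op \<alpha> f)) \<longrightarrow>
       (let T0 = op_closure (op_restrict (T_op f \<phi>) (Dinf (H_op \<alpha> f)));
            D0 = T0 `` Dinf (H_op \<alpha> f)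
        in constructing_pair f T0 \<phi>
           \<and> in_L (op_comp3 T0 (H_op \<alpha> f) (op_inv T0)) D0
           \<and> in_L (op_comp3 T0 (A_op \<alpha> f) (op_inv T0)) D0
           \<and> in_L (op_comp3 T0 (B_op \<alpha> f) (op_inv T0)) D0))
     \<and>
     (Dinf (H_op \<alpha> g) \<subseteq> E \<and> dense_set (T_op g \<psi> `` Dinf (H_op \<alpha> g)) \<longrightarrow>
       (let T0 = op_closure (op_restrict (T_op g \<psi>) (Dinf (H_op \<alpha> g)));
            E0 = T0 `` Dinf (H_op \<alpha> g)
        in constructing_pair g T0 \<psi>
           \<and> in_L (op_comp3 T0 (H_op \<alpha> g) (op_inv T0)) E0
           \<and> in_L (op_comp3 T0 (A_op \<alpha> g) (op_inv T0)) E0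
           \<and> in_L (op_comp3 T0 (B_op \<alpha> g) (op_inv T0)) E0))"
proof -
  have nonneg: "0 \<le> \<alpha> n" for n
    using alpha0 alpha[of n] by (cases n) auto
  have "\<alpha> n \<le> \<alpha> (Suc n)" for n
    using alpha[of n] alpha[of 1] by (cases n) auto
  then have mono: "mono \<alpha>" by (simp add: mono_iff_le_Suc)
  have "0 < \<alpha> 1" using alpha0 alpha[of 1] by simp
  then have growth: "\<alpha> (Suc n) \<le> (1 + r / \<alpha> 1) * \<alpha> n" if "n \<ge> 1" for n
    by (rule Suc_le_mult_of_bounded_gaps[OF _ mono]) (use r_pos alpha[OF that] that in auto)
  note restriction = constructing_pair_Dinf_restriction[where \<alpha>=\<alpha> and N=1 and K="1 + r / \<alpha> 1",
      OF _ _ nonneg mono growth]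
  show ?thesis
    using restriction[OF Tf_cp D_incl(2)] restriction[OF Tg_cp E_incl(2)] by blast
qed

end
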